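(* Let $\gamma_1(t)=e^{-\pi t^2}$, $\gamma_2(t)=2\pi t\,e^{-\pi t^2}$ and $\gamma_3(t)=(1-2\pi t)e^{-\pi t^2}$ for $t\in\mathbb{R}$. Let $\varphi,\psi\in L^2(\mathbb{R})$ satisfy $|\mathcal{F}[\gamma_j\varphi](\xi)|=|\mathcal{F}[\gamma_j\psi](\xi)|$ for all $\xi\in\mathbb{R}$ and $j=1,2,3$. Then there exists $c\in\mathbb{C}$ with $|c|=1$ such that $\psi=c\varphi$.
   Context: The Fourier transform is normalized as $\mathcal{F}f(\xi)=\int_{\mathbb{R}}f(x)e^{-2\pi i x\xi}\,dx$ for $f\in L^1(\mathbb{R})$, extended to $L^2(\mathbb{R})$ in the usual way. Equalities of functions in $L^2$ are understood almost everywhere. *)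

theory Defs
  imports "HOL-Analysis.Analysis"
begin

definition square_integrable :: "(real \<Rightarrow> complex) \<Rightarrow> bool" where
  "square_integrable f \<longleftrightarrow>
     f \<in> borel_measurable lebesgue \<and> integrable lebesgue (\<lambda>x. (norm (f x))\<^sup>2)"

definition fourier :: "(real \<Rightarrow> complex) \<Rightarrow> real \<Rightarrow> complex" where
  "fourier f \<xi> = (LINT x|lebesgue. f x * cis (- 2 * pi * x * \<xi>))"

definition gamma1 :: "real \<Rightarrow> real" where
  "gamma1 t = exp (- pi * t\<^sup>2)"

definition gamma2 :: "real \<Rightarrow> real" where
  "gamma2 t = 2 * pi * t * exp (- pi * t\<^sup>2)"

definition gamma3 :: "real \<Rightarrow> real" where
  "gamma3 t = (1 - 2 * pi * t) * exp (- pi * t\<^sup>2)"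

end

theory Submission
  imports Defs "HOL-Probability.Probability" "HOL-Complex_Analysis.Complex_Analysis"
begin

text \<open>Put \<open>f = gamma1 * \<phi>\<close> and \<open>g = gamma1 * \<psi>\<close>. The Gaussian factor gives \<open>f\<close> and \<open>g\<close>
  exponential moments of all orders, so their Fourier transforms extend to entire functions
  \<open>E\<close> and \<open>G\<close>, and the transforms of \<open>gamma2 * \<phi>\<close> and \<open>gamma3 * \<phi>\<close> are \<open>\<i> E'\<close> and
  \<open>E - \<i> E'\<close>. On the real line \<open>\<bar>E\<bar>\<^sup>2\<close> determines \<open>Re (E' * cnj E)\<close> through its derivative, and
  \<open>\<bar>E - \<i> E'\<bar>\<^sup>2 = \<bar>E\<bar>\<^sup>2 + \<bar>E'\<bar>\<^sup>2 + 2 Im (E' * cnj E)\<close> determines the imaginary part. So the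
  hypotheses force \<open>E' * cnj E = G' * cnj G\<close> on the real line, which together with
  \<open>\<bar>E\<bar> = \<bar>G\<bar>\<close> and \<open>\<bar>E'\<bar> = \<bar>G'\<bar>\<close> makes the Wronskian \<open>E' G - E G'\<close> vanish there, hence
  everywhere. Thus \<open>G = c E\<close> with \<open>\<bar>c\<bar> = 1\<close>, and injectivity of the Fourier transform on
  \<open>L\<^sup>1\<close> (Levy's uniqueness theorem) gives \<open>g = c f\<close> almost everywhere.\<close>

lemma norm_exp_minus_one_minus_le:
  fixes w :: complex
  shows "norm (exp w - 1 - w) \<le> (norm w)\<^sup>2 * exp (norm w)"
proof -
  have tail: "(\<lambda>k. w ^ (k + 2) /\<^sub>R fact (k + 2)) sums (exp w - 1 - w)"
    using sums_split_initial_segment[OF exp_converges[of w], of 2]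
    by (simp add: eval_nat_numeral diff_diff_eq)
  have summable: "summable (\<lambda>k. norm (w ^ (k + 2) /\<^sub>R fact (k + 2)))"
    using summable_norm_exp[of w] by (rule summable_ignore_initial_segment)
  have majorant: "(\<lambda>k. (norm w)\<^sup>2 * (norm w ^ k /\<^sub>R fact k)) sums ((norm w)\<^sup>2 * exp (norm w))"
    by (intro sums_mult exp_converges)
  have "norm (exp w - 1 - w) \<le> (\<Sum>k. norm (w ^ (k + 2) /\<^sub>R fact (k + 2)))"
    unfolding sums_unique[OF tail] using summable by (rule summable_norm)
  also have "\<dots> \<le> (norm w)\<^sup>2 * exp (norm w)"
  proof (rule sums_le[OF _ summable_sums[OF summable] majorant])
    fix k
    have "fact k \<le> (fact (k + 2) :: real)" by (intro fact_mono) auto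
    then have "norm w ^ (k + 2) / fact (k + 2) \<le> norm w ^ (k + 2) / fact k"
      by (intro divide_left_mono) auto
    then show "norm (w ^ (k + 2) /\<^sub>R fact (k + 2)) \<le> (norm w)\<^sup>2 * (norm w ^ k /\<^sub>R fact k)"
      by (simp add: norm_power norm_mult power_add divide_simps mult_ac power2_eq_square)
  qed
  finally show ?thesis .
qed

lemma has_field_derivative_of_quadratic_remainder:
  fixes F :: "'a::real_normed_field \<Rightarrow> 'a"
  assumes "\<And>h. norm h \<le> 1 \<Longrightarrow> norm (F (z + h) - F z - h * D) \<le> C * (norm h)\<^sup>2"
  shows "(F has_field_derivative D) (at z)"
proof -
  have "\<forall>\<^sub>F h in at 0. norm ((F (z + h) - F z) / h - D) \<le> C * norm h"
  proof -
    have "\<forall>\<^sub>F h in at (0::'a). h \<noteq> 0 \<and> norm h < 1"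
      using eventually_at[of "\<lambda>h. h \<noteq> 0 \<and> norm h < 1" 0 UNIV]
      by (auto intro!: exI[of _ 1] simp: dist_norm)
    then show ?thesis
    proof eventually_elim
      case (elim h)
      have "(F (z + h) - F z) / h - D = (F (z + h) - F z - h * D) / h"
        using elim by (simp add: field_simps)
      then have "norm ((F (z + h) - F z) / h - D) = norm (F (z + h) - F z - h * D) / norm h"
        by (simp add: norm_divide)
      also have "\<dots> \<le> C * (norm h)\<^sup>2 / norm h"
        using assms[of h] elim by (intro divide_right_mono) auto
      finally show ?case using elim by (simp add: power2_eq_square)
    qed
  qed
  moreover have "((\<lambda>h. C * norm h) \<longlongrightarrow> 0) (at (0::'a))"
    by (intro tendsto_eq_intros) auto
  ultimately have "((\<lambda>h. (F (z + h) - F z) / h - D) \<longlongrightarrow> 0) (at 0)"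
    by (rule Lim_null_comparison)
  then show ?thesis
    unfolding DERIV_def by (rule LIM_zero_cancel)
qed

lemma integrable_norm_mult_of_square_integrable:
  fixes \<phi> :: "'a \<Rightarrow> 'b::{banach, second_countable_topology}" and w :: "'a \<Rightarrow> real"
  assumes "\<phi> \<in> borel_measurable M" "w \<in> borel_measurable M"
    and "integrable M (\<lambda>x. (norm (\<phi> x))\<^sup>2)" "integrable M (\<lambda>x. (w x)\<^sup>2)"
  shows "integrable M (\<lambda>x. norm (\<phi> x) * w x)"
proof (rule Bochner_Integration.integrable_bound)
  show "integrable M (\<lambda>x. ((norm (\<phi> x))\<^sup>2 + (w x)\<^sup>2) / 2)"
    using assms(3,4) by (intro integrable_divide Bochner_Integration.integrable_add)
  show "(\<lambda>x. norm (\<phi> x) * w x) \<in> borel_measurable M"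
    using assms(1,2) by measurable
  show "AE x in M. norm (norm (\<phi> x) * w x) \<le> norm (((norm (\<phi> x))\<^sup>2 + (w x)\<^sup>2) / 2)"
  proof (rule AE_I2)
    fix x
    have "0 \<le> (norm (\<phi> x) - \<bar>w x\<bar>)\<^sup>2" by simp
    then show "norm (norm (\<phi> x) * w x) \<le> norm (((norm (\<phi> x))\<^sup>2 + (w x)\<^sup>2) / 2)"
      by (simp add: abs_mult power2_eq_square algebra_simps)
  qed
qed

lemma integrable_gauss_weight_square:
  assumes "R \<ge> 0"
  shows "integrable lborel (\<lambda>x. (exp (- pi * x\<^sup>2) * \<bar>x\<bar> ^ k * exp (2 * pi * R * \<bar>x\<bar>))\<^sup>2)"
proof (rule Bochner_Integration.integrable_bound)
  define C where "C = exp (4 * pi\<^sup>2 * R\<^sup>2) * sqrt (2 * pi)"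
  show "integrable lborel (\<lambda>x. C * (std_normal_density x * \<bar>x\<bar> ^ (2 * k)))"
    by (intro integrable_mult_right integrable_std_normal_moment_abs)
  show "(\<lambda>x. (exp (- pi * x\<^sup>2) * \<bar>x\<bar> ^ k * exp (2 * pi * R * \<bar>x\<bar>))\<^sup>2) \<in> borel_measurable lborel"
    by measurable
  show "AE x in lborel. norm ((exp (- pi * x\<^sup>2) * \<bar>x\<bar> ^ k * exp (2 * pi * R * \<bar>x\<bar>))\<^sup>2)
          \<le> norm (C * (std_normal_density x * \<bar>x\<bar> ^ (2 * k)))"
  proof (rule AE_I2)
    fix x :: real
    have "- 2 * pi * x\<^sup>2 + 4 * pi * R * \<bar>x\<bar> \<le> 4 * pi\<^sup>2 * R\<^sup>2 - x\<^sup>2 / 2"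
    proof -
      have "0 \<le> (\<bar>x\<bar> - 2 * pi * R)\<^sup>2" by simp
      moreover have "(\<bar>x\<bar> - 2 * pi * R)\<^sup>2 = x\<^sup>2 - 4 * pi * R * \<bar>x\<bar> + 4 * pi\<^sup>2 * R\<^sup>2"
        by (simp add: power2_eq_square algebra_simps)
      moreover have "3 / 2 * x\<^sup>2 \<le> 2 * pi * x\<^sup>2"
        using pi_gt3 by (intro mult_right_mono) auto
      ultimately show ?thesis by linarith
    qed
    then have bound: "exp (- 2 * pi * x\<^sup>2 + 4 * pi * R * \<bar>x\<bar>) * \<bar>x\<bar> ^ (2 * k)
        \<le> exp (4 * pi\<^sup>2 * R\<^sup>2 - x\<^sup>2 / 2) * \<bar>x\<bar> ^ (2 * k)"
      by (intro mult_right_mono) auto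
    have square_eq: "(exp (- pi * x\<^sup>2) * \<bar>x\<bar> ^ k * exp (2 * pi * R * \<bar>x\<bar>))\<^sup>2
        = exp (- 2 * pi * x\<^sup>2 + 4 * pi * R * \<bar>x\<bar>) * \<bar>x\<bar> ^ (2 * k)"
      by (simp add: power_mult_distrib power_mult[symmetric] exp_add[symmetric] exp_double[symmetric] mult_ac)
    have C_eq: "C * (std_normal_density x * \<bar>x\<bar> ^ (2 * k))
        = exp (4 * pi\<^sup>2 * R\<^sup>2 - x\<^sup>2 / 2) * \<bar>x\<bar> ^ (2 * k)"
      by (simp only: diff_conv_add_uminus exp_add) (simp add: C_def std_normal_density_def)
    show "norm ((exp (- pi * x\<^sup>2) * \<bar>x\<bar> ^ k * exp (2 * pi * R * \<bar>x\<bar>))\<^sup>2)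
          \<le> norm (C * (std_normal_density x * \<bar>x\<bar> ^ (2 * k)))"
      unfolding square_eq C_eq using bound by simp
  qed
qed

definition has_exp_moments :: "(real \<Rightarrow> complex) \<Rightarrow> bool" where
  "has_exp_moments f \<longleftrightarrow> f \<in> borel_measurable lborel \<and>
     (\<forall>R\<ge>0. \<forall>k. integrable lborel (\<lambda>x. norm (f x) * (\<bar>x\<bar> ^ k * exp (2 * pi * R * \<bar>x\<bar>))))"

lemma has_exp_moments_measurable: "has_exp_moments f \<Longrightarrow> f \<in> borel_measurable lborel"
  by (simp add: has_exp_moments_def)

lemma has_exp_moments_integrable:
  "has_exp_moments f \<Longrightarrow> R \<ge> 0 \<Longrightarrow>
     integrable lborel (\<lambda>x. norm (f x) * (\<bar>x\<bar> ^ k * exp (2 * pi * R * \<bar>x\<bar>)))"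
  by (simp add: has_exp_moments_def)

lemma has_exp_moments_gamma1_mult:
  fixes \<phi> :: "real \<Rightarrow> complex"
  assumes "\<phi> \<in> borel_measurable lborel" and "integrable lborel (\<lambda>x. (norm (\<phi> x))\<^sup>2)"
  shows "has_exp_moments (\<lambda>x. of_real (gamma1 x) * \<phi> x)"
  unfolding has_exp_moments_def
proof (intro conjI allI impI)
  show "(\<lambda>x. of_real (gamma1 x) * \<phi> x) \<in> borel_measurable lborel"
    using assms(1) unfolding gamma1_def by measurable
  fix R :: real and k :: nat assume "R \<ge> 0"
  have "integrable lborel (\<lambda>x. norm (\<phi> x) * (exp (- pi * x\<^sup>2) * \<bar>x\<bar> ^ k * exp (2 * pi * R * \<bar>x\<bar>)))"
    using assms integrable_gauss_weight_square[OF \<open>R \<ge> 0\<close>]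
    by (intro integrable_norm_mult_of_square_integrable) auto
  then show "integrable lborel (\<lambda>x. norm (of_real (gamma1 x) * \<phi> x) * (\<bar>x\<bar> ^ k * exp (2 * pi * R * \<bar>x\<bar>)))"
    by (simp add: gamma1_def norm_mult mult_ac)
qed

lemma has_exp_moments_mult_x:
  assumes "has_exp_moments f"
  shows "has_exp_moments (\<lambda>x. c * of_real x * f x)"
  unfolding has_exp_moments_def
proof (intro conjI allI impI)
  show "(\<lambda>x. c * of_real x * f x) \<in> borel_measurable lborel"
    using has_exp_moments_measurable[OF assms] by measurable
  fix R :: real and k :: nat assume "R \<ge> 0"
  have "integrable lborel (\<lambda>x. norm c * (norm (f x) * (\<bar>x\<bar> ^ Suc k * exp (2 * pi * R * \<bar>x\<bar>))))"
    using has_exp_moments_integrable[OF assms \<open>R \<ge> 0\<close>] by (rule integrable_mult_right)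
  then show "integrable lborel (\<lambda>x. norm (c * of_real x * f x) * (\<bar>x\<bar> ^ k * exp (2 * pi * R * \<bar>x\<bar>)))"
    by (simp add: norm_mult mult_ac)
qed

section \<open>The Fourier--Laplace transform\<close>

definition fourier_laplace :: "(real \<Rightarrow> complex) \<Rightarrow> complex \<Rightarrow> complex" where
  "fourier_laplace f z = (\<integral>x. f x * exp (- (2 * pi * \<i>) * of_real x * z) \<partial>lborel)"

lemma norm_fourier_kernel_le:
  "norm (exp (- (2 * pi * \<i>) * of_real x * z)) \<le> exp (2 * pi * norm z * \<bar>x\<bar>)"
proof -
  have "Re (- (2 * pi * \<i>) * of_real x * z) = 2 * pi * (x * Im z)" by simp
  also have "\<dots> \<le> 2 * pi * (norm z * \<bar>x\<bar>)"
  proof -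
    have "x * Im z \<le> \<bar>x\<bar> * \<bar>Im z\<bar>" by (metis abs_ge_self abs_mult)
    also have "\<dots> \<le> \<bar>x\<bar> * norm z" by (intro mult_left_mono abs_Im_le_cmod) auto
    finally show ?thesis by (simp add: mult_ac)
  qed
  finally show ?thesis by (simp add: mult_ac)
qed

lemma has_exp_moments_integrable_kernel:
  assumes "has_exp_moments f"
  shows "integrable lborel (\<lambda>x. f x * exp (- (2 * pi * \<i>) * of_real x * z))"
proof (rule Bochner_Integration.integrable_bound)
  show "integrable lborel (\<lambda>x. norm (f x) * (\<bar>x\<bar> ^ 0 * exp (2 * pi * norm z * \<bar>x\<bar>)))"
    using has_exp_moments_integrable[OF assms, of "norm z" 0] by simp
  show "(\<lambda>x. f x * exp (- (2 * pi * \<i>) * of_real x * z)) \<in> borel_measurable lborel"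
    using has_exp_moments_measurable[OF assms] by measurable
  show "AE x in lborel. norm (f x * exp (- (2 * pi * \<i>) * of_real x * z))
      \<le> norm (norm (f x) * (\<bar>x\<bar> ^ 0 * exp (2 * pi * norm z * \<bar>x\<bar>)))"
    using norm_fourier_kernel_le by (intro AE_I2) (simp add: norm_mult mult_left_mono)
qed

lemma fourier_laplace_cmult: "fourier_laplace (\<lambda>x. c * f x) z = c * fourier_laplace f z"
  unfolding fourier_laplace_def by (simp add: mult.assoc)

lemma fourier_laplace_diff:
  "has_exp_moments f \<Longrightarrow> has_exp_moments g \<Longrightarrow>
     fourier_laplace (\<lambda>x. f x - g x) z = fourier_laplace f z - fourier_laplace g z"
  unfolding fourier_laplace_def
  using has_exp_moments_integrable_kernel[of f z] has_exp_moments_integrable_kernel[of g z]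
  by (simp add: left_diff_distrib Bochner_Integration.integral_diff)

lemma norm_fourier_kernel_remainder_le:
  fixes x :: real and z h :: complex
  defines "a \<equiv> - (2 * pi * \<i>) * of_real x"
  assumes "norm h \<le> 1"
  shows "norm (exp (a * (z + h)) - exp (a * z) - h * a * exp (a * z))
    \<le> 4 * pi\<^sup>2 * (norm h)\<^sup>2 * (\<bar>x\<bar> ^ 2 * exp (2 * pi * (norm z + 1) * \<bar>x\<bar>))"
proof -
  have norm_ah: "norm (a * h) = 2 * pi * \<bar>x\<bar> * norm h"
    by (simp add: a_def norm_mult)
  have "exp (a * (z + h)) - exp (a * z) - h * a * exp (a * z) = exp (a * z) * (exp (a * h) - 1 - a * h)"
    by (simp add: distrib_left exp_add algebra_simps)
  then have "norm (exp (a * (z + h)) - exp (a * z) - h * a * exp (a * z))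
      = norm (exp (a * z)) * norm (exp (a * h) - 1 - a * h)"
    by (simp add: norm_mult)
  also have "\<dots> \<le> exp (2 * pi * norm z * \<bar>x\<bar>) * ((2 * pi * \<bar>x\<bar> * norm h)\<^sup>2 * exp (2 * pi * \<bar>x\<bar>))"
  proof (rule mult_mono)
    show "norm (exp (a * z)) \<le> exp (2 * pi * norm z * \<bar>x\<bar>)"
      unfolding a_def by (rule norm_fourier_kernel_le)
    have "norm (exp (a * h) - 1 - a * h) \<le> (norm (a * h))\<^sup>2 * exp (norm (a * h))"
      by (rule norm_exp_minus_one_minus_le)
    also have "\<dots> \<le> (2 * pi * \<bar>x\<bar> * norm h)\<^sup>2 * exp (2 * pi * \<bar>x\<bar>)"
      unfolding norm_ah using assms(2) by (intro mult_left_mono) (auto intro!: mult_left_le)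
    finally show "norm (exp (a * h) - 1 - a * h) \<le> (2 * pi * \<bar>x\<bar> * norm h)\<^sup>2 * exp (2 * pi * \<bar>x\<bar>)" .
  qed auto
  also have "\<dots> = 4 * pi\<^sup>2 * (norm h)\<^sup>2 * (\<bar>x\<bar> ^ 2 * (exp (2 * pi * norm z * \<bar>x\<bar>) * exp (2 * pi * \<bar>x\<bar>)))"
    by (simp add: power_mult_distrib)
  also have "exp (2 * pi * norm z * \<bar>x\<bar>) * exp (2 * pi * \<bar>x\<bar>) = exp (2 * pi * (norm z + 1) * \<bar>x\<bar>)"
    by (simp add: exp_add[symmetric] distrib_left distrib_right)
  finally show ?thesis .
qed

lemma norm_fourier_laplace_remainder_le:
  assumes f: "has_exp_moments f" and h: "norm h \<le> 1"
  shows "norm (fourier_laplace f (z + h) - fourier_laplace f z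
      - h * fourier_laplace (\<lambda>x. - (2 * pi * \<i>) * of_real x * f x) z)
    \<le> 4 * pi\<^sup>2 * (\<integral>x. norm (f x) * (\<bar>x\<bar> ^ 2 * exp (2 * pi * (norm z + 1) * \<bar>x\<bar>)) \<partial>lborel) * (norm h)\<^sup>2"
proof -
  define a where "a x = - (2 * pi * \<i>) * of_real x" for x :: real
  let ?R = "\<lambda>x. f x * (exp (a x * (z + h)) - exp (a x * z) - h * a x * exp (a x * z))"
  have R_eq: "?R x = f x * exp (a x * (z + h)) - f x * exp (a x * z) - h * (a x * f x * exp (a x * z))" for x
    by (simp add: algebra_simps)
  have "\<And>w. integrable lborel (\<lambda>x. f x * exp (a x * w))"
    "integrable lborel (\<lambda>x. a x * f x * exp (a x * z))"
    using has_exp_moments_integrable_kernel[OF f]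
      has_exp_moments_integrable_kernel[OF has_exp_moments_mult_x[OF f]]
    by (simp_all add: a_def mult.assoc)
  then have integrable_R: "integrable lborel ?R"
    and remainder_eq: "fourier_laplace f (z + h) - fourier_laplace f z - h * fourier_laplace (\<lambda>x. a x * f x) z
      = (\<integral>x. ?R x \<partial>lborel)"
    unfolding R_eq fourier_laplace_def a_def[symmetric]
    by (simp_all add: Bochner_Integration.integral_diff mult.assoc)
  have "norm (\<integral>x. ?R x \<partial>lborel) \<le> (\<integral>x. 4 * pi\<^sup>2 * (norm h)\<^sup>2 *
      (norm (f x) * (\<bar>x\<bar> ^ 2 * exp (2 * pi * (norm z + 1) * \<bar>x\<bar>))) \<partial>lborel)"
  proof (rule Bochner_Integration.integral_norm_bound_integral[OF integrable_R])
    show "integrable lborel (\<lambda>x. 4 * pi\<^sup>2 * (norm h)\<^sup>2 *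
        (norm (f x) * (\<bar>x\<bar> ^ 2 * exp (2 * pi * (norm z + 1) * \<bar>x\<bar>))))"
      using has_exp_moments_integrable[OF f, of "norm z + 1" 2] by (intro integrable_mult_right) simp
    show "norm (?R x) \<le> 4 * pi\<^sup>2 * (norm h)\<^sup>2 *
        (norm (f x) * (\<bar>x\<bar> ^ 2 * exp (2 * pi * (norm z + 1) * \<bar>x\<bar>)))" for x
      using norm_fourier_kernel_remainder_le[OF h, of x z] unfolding a_def
      by (simp add: norm_mult mult_left_mono mult.left_commute)
  qed
  also have "\<dots> = 4 * pi\<^sup>2 * (\<integral>x. norm (f x) * (\<bar>x\<bar> ^ 2 * exp (2 * pi * (norm z + 1) * \<bar>x\<bar>)) \<partial>lborel)
      * (norm h)\<^sup>2"
    by (subst integral_mult_right_zero) (simp only: mult_ac)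
  finally show ?thesis
    unfolding a_def[symmetric] remainder_eq .
qed

lemma has_field_derivative_fourier_laplace:
  assumes "has_exp_moments f"
  shows "(fourier_laplace f has_field_derivative
           fourier_laplace (\<lambda>x. - (2 * pi * \<i>) * of_real x * f x) z) (at z)"
  using norm_fourier_laplace_remainder_le[OF assms]
  by (rule has_field_derivative_of_quadratic_remainder)

section \<open>Injectivity of the Fourier transform on integrable functions\<close>

lemma real_distribution_density_lborel:
  fixes g :: "real \<Rightarrow> real"
  assumes "g \<in> borel_measurable lborel" "\<And>x. 0 \<le> g x" "integrable lborel g"
    and "(\<integral>x. g x \<partial>lborel) = 1"
  shows "real_distribution (density lborel g)"
proof -
  have "prob_space (density lborel g)"
    by standard (use assms in \<open>simp add: emeasure_density nn_integral_eq_integral\<close>)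
  then show ?thesis
    by (simp add: real_distribution_def real_distribution_axioms_def)
qed

lemma char_density_lborel:
  fixes g :: "real \<Rightarrow> real"
  assumes "g \<in> borel_measurable lborel" "\<And>x. 0 \<le> g x"
  shows "char (density lborel g) t = (\<integral>x. of_real (g x) * iexp (t * x) \<partial>lborel)"
  unfolding char_def using assms
  by (subst integral_density) (auto simp: scaleR_conv_of_real)

lemma AE_eq_of_char_integral_eq_probability_densities:
  fixes p n :: "real \<Rightarrow> real"
  assumes meas: "p \<in> borel_measurable lborel" "n \<in> borel_measurable lborel"
    and nonneg: "\<And>x. 0 \<le> p x" "\<And>x. 0 \<le> n x"
    and int: "integrable lborel p" "integrable lborel n"
    and mass: "(\<integral>x. p x \<partial>lborel) = 1" "(\<integral>x. n x \<partial>lborel) = 1"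
    and eq: "\<And>t. (\<integral>x. of_real (p x) * iexp (t * x) \<partial>lborel) = (\<integral>x. of_real (n x) * iexp (t * x) \<partial>lborel)"
  shows "AE x in lborel. p x = n x"
proof -
  have "density lborel p = density lborel n"
  proof (rule Levy_uniqueness)
    show "real_distribution (density lborel p)" "real_distribution (density lborel n)"
      using meas nonneg int mass by (auto intro: real_distribution_density_lborel)
    show "char (density lborel p) = char (density lborel n)"
      using meas nonneg eq by (simp add: fun_eq_iff char_density_lborel)
  qed
  then have "AE x in lborel. ennreal (p x) = ennreal (n x)"
    using meas by (intro sigma_finite_measure.density_unique[OF sigma_finite_lborel]) auto
  then show ?thesis
    by eventually_elim (use nonneg in \<open>simp add: ennreal_inj\<close>)
qed

lemma AE_eq_of_char_integral_eq:
  fixes p n :: "real \<Rightarrow> real"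
  assumes meas: "p \<in> borel_measurable lborel" "n \<in> borel_measurable lborel"
    and nonneg: "\<And>x. 0 \<le> p x" "\<And>x. 0 \<le> n x"
    and int: "integrable lborel p" "integrable lborel n"
    and eq: "\<And>t. (\<integral>x. of_real (p x) * iexp (t * x) \<partial>lborel) = (\<integral>x. of_real (n x) * iexp (t * x) \<partial>lborel)"
  shows "AE x in lborel. p x = n x"
proof -
  define M where "M = (\<integral>x. p x \<partial>lborel)"
  have mass_eq: "(\<integral>x. n x \<partial>lborel) = M"
    using eq[of 0] by (simp add: M_def)
  have "M \<ge> 0"
    unfolding M_def using nonneg by simp
  consider "M = 0" | "M > 0"
    using \<open>M \<ge> 0\<close> by linarith
  then show ?thesis
  proof cases
    case 1
    have "AE x in lborel. p x = 0"
      using 1 meas nonneg int unfolding M_def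
      by (subst integral_nonneg_eq_0_iff_AE[symmetric]) auto
    moreover have "AE x in lborel. n x = 0"
      using 1 mass_eq meas nonneg int
      by (subst integral_nonneg_eq_0_iff_AE[symmetric]) auto
    ultimately show ?thesis by eventually_elim simp
  next
    case 2
    have "AE x in lborel. p x / M = n x / M"
    proof (rule AE_eq_of_char_integral_eq_probability_densities)
      show "(\<lambda>x. p x / M) \<in> borel_measurable lborel" "(\<lambda>x. n x / M) \<in> borel_measurable lborel"
        using meas by simp_all
      show "0 \<le> p x / M" "0 \<le> n x / M" for x
        using nonneg 2 by simp_all
      show "integrable lborel (\<lambda>x. p x / M)" "integrable lborel (\<lambda>x. n x / M)"
        using int by simp_all
      show "(\<integral>x. p x / M \<partial>lborel) = 1" "(\<integral>x. n x / M \<partial>lborel) = 1"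
        using 2 mass_eq by (simp_all add: M_def)
      show "(\<integral>x. of_real (p x / M) * iexp (t * x) \<partial>lborel) = (\<integral>x. of_real (n x / M) * iexp (t * x) \<partial>lborel)" for t
        using eq[of t] by (simp add: mult.commute[of _ "iexp _"] of_real_divide)
    qed
    then show ?thesis
      by eventually_elim (use 2 in simp)
  qed
qed

lemma integrable_mult_iexp:
  fixes g :: "real \<Rightarrow> complex"
  assumes "integrable lborel g"
  shows "integrable lborel (\<lambda>x. g x * iexp (t * x))"
proof (rule Bochner_Integration.integrable_bound[OF assms])
  show "(\<lambda>x. g x * iexp (t * x)) \<in> borel_measurable lborel"
    using borel_measurable_integrable[OF assms] by measurable
  show "AE x in lborel. norm (g x * iexp (t * x)) \<le> norm (g x)"
    by (intro AE_I2) (simp add: norm_mult)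
qed

lemma AE_zero_of_char_integral_zero:
  fixes a :: "real \<Rightarrow> real"
  assumes meas: "a \<in> borel_measurable lborel" and int: "integrable lborel a"
    and zero: "\<And>t. (\<integral>x. of_real (a x) * iexp (t * x) \<partial>lborel) = 0"
  shows "AE x in lborel. a x = 0"
proof -
  define p where "p x = max (a x) 0" for x
  define n where "n x = max (- a x) 0" for x
  have a_eq: "a x = p x - n x" for x
    unfolding p_def n_def by auto
  have integrable_pn: "integrable lborel p" "integrable lborel n"
    using int unfolding p_def n_def by auto
  have integrable: "integrable lborel (\<lambda>x. of_real (q x) * iexp (t * x))"
    if "integrable lborel q" for q t
    using that by (intro integrable_mult_iexp) (simp only: complex_of_real_integrable_eq)
  have "AE x in lborel. p x = n x"
  proof (rule AE_eq_of_char_integral_eq)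
    show "p \<in> borel_measurable lborel" "n \<in> borel_measurable lborel"
      using meas unfolding p_def n_def by measurable
    show "integrable lborel p" "integrable lborel n"
      by (fact integrable_pn)+
    show "0 \<le> p x" "0 \<le> n x" for x
      unfolding p_def n_def by auto
    fix t
    have "(\<integral>x. of_real (a x) * iexp (t * x) \<partial>lborel)
        = (\<integral>x. of_real (p x) * iexp (t * x) - of_real (n x) * iexp (t * x) \<partial>lborel)"
      by (intro Bochner_Integration.integral_cong refl) (simp add: a_eq left_diff_distrib)
    also have "\<dots> = (\<integral>x. of_real (p x) * iexp (t * x) \<partial>lborel) - (\<integral>x. of_real (n x) * iexp (t * x) \<partial>lborel)"
      using integrable[OF integrable_pn(1)] integrable[OF integrable_pn(2)]
      by (rule Bochner_Integration.integral_diff)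
    finally show "(\<integral>x. of_real (p x) * iexp (t * x) \<partial>lborel) = (\<integral>x. of_real (n x) * iexp (t * x) \<partial>lborel)"
      using zero[of t] by simp
  qed
  then show ?thesis
    by eventually_elim (simp add: a_eq)
qed

lemma AE_Re_zero_of_integral_iexp_zero:
  fixes h :: "real \<Rightarrow> complex"
  assumes meas: "h \<in> borel_measurable lborel" and int: "integrable lborel h"
    and h_zero: "\<And>t. (\<integral>x. h x * iexp (t * x) \<partial>lborel) = 0"
  shows "AE x in lborel. Re (h x) = 0"
proof (rule AE_zero_of_char_integral_zero)
  show "(\<lambda>x. Re (h x)) \<in> borel_measurable lborel" "integrable lborel (\<lambda>x. Re (h x))"
    using meas int by auto
  fix t
  have cnj_zero: "(\<integral>x. cnj (h x) * iexp (t * x) \<partial>lborel) = 0"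
  proof -
    have "(\<integral>x. cnj (h x) * iexp (t * x) \<partial>lborel) = (\<integral>x. cnj (h x * iexp (- t * x)) \<partial>lborel)"
      by (intro Bochner_Integration.integral_cong refl) (simp add: exp_cnj)
    also have "\<dots> = cnj (\<integral>x. h x * iexp (- t * x) \<partial>lborel)"
      by (rule Bochner_Integration.integral_cnj)
    finally show ?thesis
      by (simp only: h_zero complex_cnj_zero)
  qed
  have "(\<integral>x. of_real (Re (h x)) * iexp (t * x) \<partial>lborel)
      = (\<integral>x. (h x * iexp (t * x) + cnj (h x) * iexp (t * x)) / 2 \<partial>lborel)"
  proof (intro Bochner_Integration.integral_cong refl)
    fix x
    have "h x * iexp (t * x) + cnj (h x) * iexp (t * x) = (h x + cnj (h x)) * iexp (t * x)"
      by (simp only: distrib_right)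
    then show "of_real (Re (h x)) * iexp (t * x) = (h x * iexp (t * x) + cnj (h x) * iexp (t * x)) / 2"
      by (simp add: complex_add_cnj)
  qed
  also have "\<dots> = ((\<integral>x. h x * iexp (t * x) \<partial>lborel) + (\<integral>x. cnj (h x) * iexp (t * x) \<partial>lborel)) / 2"
    using integrable_mult_iexp[OF int] integrable_mult_iexp[OF integrable_cnj[OF int]]
    by (simp add: Bochner_Integration.integral_add)
  finally show "(\<integral>x. of_real (Re (h x)) * iexp (t * x) \<partial>lborel) = 0"
    by (simp only: h_zero cnj_zero) simp
qed

lemma AE_zero_of_integral_iexp_zero:
  fixes h :: "real \<Rightarrow> complex"
  assumes meas: "h \<in> borel_measurable lborel" and int: "integrable lborel h"
    and h_zero: "\<And>t. (\<integral>x. h x * iexp (t * x) \<partial>lborel) = 0"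
  shows "AE x in lborel. h x = 0"
proof -
  have "AE x in lborel. Re (h x) = 0"
    using meas int h_zero by (rule AE_Re_zero_of_integral_iexp_zero)
  moreover have "AE x in lborel. Re (- \<i> * h x) = 0"
  proof (rule AE_Re_zero_of_integral_iexp_zero)
    show "(\<lambda>x. - \<i> * h x) \<in> borel_measurable lborel" "integrable lborel (\<lambda>x. - \<i> * h x)"
      using meas int by auto
    show "(\<integral>x. - \<i> * h x * iexp (t * x) \<partial>lborel) = 0" for t
      using h_zero[of t] by (simp only: mult.assoc integral_mult_right_zero mult_zero_right)
  qed
  ultimately show ?thesis
    by eventually_elim (simp add: complex_eq_iff)
qed

lemma fourier_laplace_unique:
  fixes f g :: "real \<Rightarrow> complex"
  assumes meas: "f \<in> borel_measurable lborel" "g \<in> borel_measurable lborel"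
    and int: "integrable lborel f" "integrable lborel g"
    and eq: "\<And>\<xi>::real. fourier_laplace f \<xi> = fourier_laplace g \<xi>"
  shows "AE x in lborel. f x = g x"
proof -
  have integral_iexp: "(\<integral>x. u x * iexp (t * x) \<partial>lborel) = fourier_laplace u (- t / (2 * pi))" for u t
    unfolding fourier_laplace_def by (simp add: mult_ac)
  have "AE x in lborel. f x - g x = 0"
  proof (rule AE_zero_of_integral_iexp_zero)
    show "(\<lambda>x. f x - g x) \<in> borel_measurable lborel" "integrable lborel (\<lambda>x. f x - g x)"
      using meas int by auto
    fix t
    have "(\<integral>x. (f x - g x) * iexp (t * x) \<partial>lborel)
        = (\<integral>x. f x * iexp (t * x) - g x * iexp (t * x) \<partial>lborel)"
      by (simp only: left_diff_distrib)
    also have "\<dots> = (\<integral>x. f x * iexp (t * x) \<partial>lborel) - (\<integral>x. g x * iexp (t * x) \<partial>lborel)"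
      using integrable_mult_iexp[OF int(1)] integrable_mult_iexp[OF int(2)]
      by (rule Bochner_Integration.integral_diff)
    finally show "(\<integral>x. (f x - g x) * iexp (t * x) \<partial>lborel) = 0"
      by (simp only: integral_iexp eq diff_self)
  qed
  then show ?thesis by simp
qed

section \<open>Phase retrieval for entire functions\<close>

lemma has_real_derivative_norm_square:
  fixes E :: "complex \<Rightarrow> complex"
  assumes "(E has_field_derivative E') (at (of_real t))"
  shows "((\<lambda>s. (norm (E (of_real s)))\<^sup>2) has_real_derivative 2 * Re (E' * cnj (E (of_real t)))) (at t)"
proof -
  have v: "((\<lambda>s. E (of_real s)) has_vector_derivative E') (at t)"
    using has_vector_derivative_real_field[OF assms] by simp
  have norm_square: "(\<lambda>s. (norm (E (of_real s)))\<^sup>2)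
      = (\<lambda>s. Re (E (of_real s)) * Re (E (of_real s)) + Im (E (of_real s)) * Im (E (of_real s)))"
    by (intro ext, subst cmod_power2) (simp add: power2_eq_square)
  have "((\<lambda>s. Re (E (of_real s)) * Re (E (of_real s)) + Im (E (of_real s)) * Im (E (of_real s)))
      has_real_derivative (Re E' * Re (E (of_real t)) + Re E' * Re (E (of_real t)))
        + (Im E' * Im (E (of_real t)) + Im E' * Im (E (of_real t)))) (at t)"
    by (intro DERIV_add DERIV_mult has_field_derivative_Re[OF v] has_field_derivative_Im[OF v])
  then show ?thesis
    unfolding norm_square by (rule DERIV_cong) (simp add: algebra_simps)
qed

lemma complex_wronskian_eq_0:
  fixes a b c d :: complex
  assumes "norm a = norm c" "norm b = norm d" "b * cnj a = d * cnj c"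
  shows "b * c = a * d"
proof -
  have square_a: "a * cnj a = c * cnj c" and square_b: "b * cnj b = d * cnj d"
    using assms(1,2) by (simp_all flip: complex_norm_square)
  have conj: "a * cnj b = c * cnj d"
    using arg_cong[OF assms(3), of cnj] by (simp add: mult.commute)
  have "(b * c - a * d) * cnj (b * c - a * d)
      = (b * cnj b) * (c * cnj c) - (b * cnj a) * (c * cnj d) - (a * cnj b) * (d * cnj c) + (a * cnj a) * (d * cnj d)"
    by (simp add: algebra_simps)
  also have "\<dots> = 0"
    unfolding square_a square_b assms(3) conj by (simp add: algebra_simps)
  finally have "(b * c - a * d) * cnj (b * c - a * d) = 0" .
  then show ?thesis
    by (simp only: mult_eq_0_iff complex_cnj_zero_iff right_minus_eq disj_absorb)
qed

lemma norm_minus_i_mult_square: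
  fixes a b :: complex
  shows "(norm (a - \<i> * b))\<^sup>2 = (norm a)\<^sup>2 + (norm b)\<^sup>2 + 2 * Im (b * cnj a)"
  unfolding cmod_power2 by (simp add: power2_eq_square) (simp add: field_simps)

lemma wronskian_eq_0_on_real:
  fixes E G E' G' :: "complex \<Rightarrow> complex"
  assumes dE: "\<And>z. (E has_field_derivative E' z) (at z)"
    and dG: "\<And>z. (G has_field_derivative G' z) (at z)"
    and norm_eq: "\<And>t::real. norm (E t) = norm (G t)"
    and norm_deriv_eq: "\<And>t::real. norm (E' t) = norm (G' t)"
    and norm_combination_eq: "\<And>t::real. norm (E t - \<i> * E' t) = norm (G t - \<i> * G' t)"
  shows "E' (of_real t) * G (of_real t) = E (of_real t) * G' (of_real t)"
proof (rule complex_wronskian_eq_0)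
  show "norm (E t) = norm (G t)" "norm (E' t) = norm (G' t)"
    by (fact norm_eq norm_deriv_eq)+
  \<comment> \<open>the real part of \<open>E' * cnj E\<close> is half the derivative of \<open>\<bar>E\<bar>\<^sup>2\<close> along the real line\<close>
  have "(\<lambda>s. (norm (E (of_real s)))\<^sup>2) = (\<lambda>s. (norm (G (of_real s)))\<^sup>2)"
    using norm_eq by simp
  then have "((\<lambda>s. (norm (E (of_real s)))\<^sup>2) has_real_derivative 2 * Re (G' t * cnj (G t))) (at t)"
    using has_real_derivative_norm_square[OF dG] by simp
  then have "2 * Re (E' t * cnj (E t)) = 2 * Re (G' t * cnj (G t))"
    by (rule DERIV_unique[OF has_real_derivative_norm_square[OF dE]])
  then have "Re (E' t * cnj (E t)) = Re (G' t * cnj (G t))"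
    by simp
  moreover have "Im (E' t * cnj (E t)) = Im (G' t * cnj (G t))"
    using norm_minus_i_mult_square[of "E t" "E' t"] norm_minus_i_mult_square[of "G t" "G' t"]
      norm_eq[of t] norm_deriv_eq[of t] norm_combination_eq[of t] by simp
  ultimately show "E' t * cnj (E t) = G' t * cnj (G t)"
    by (simp add: complex_eq_iff)
qed

lemma entire_eq_0_of_real_eq_0:
  assumes "f holomorphic_on UNIV" and "\<And>t::real. f t = 0"
  shows "f z = 0"
proof (rule analytic_continuation[of f UNIV "range complex_of_real" 0])
  show "(0::complex) islimpt range complex_of_real"
    unfolding islimpt_approachable
  proof (intro allI impI)
    fix e :: real assume "e > 0"
    then show "\<exists>x'\<in>range complex_of_real. x' \<noteq> 0 \<and> dist x' 0 < e"
      by (intro bexI[of _ "of_real (e / 2)"] rangeI) auto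
  qed
qed (use assms in auto)

lemma entire_wronskian_eq_0:
  fixes E G E' G' :: "complex \<Rightarrow> complex"
  assumes dE: "\<And>z. (E has_field_derivative E' z) (at z)"
    and dG: "\<And>z. (G has_field_derivative G' z) (at z)"
    and "\<And>t::real. E' t * G t = E t * G' t"
  shows "E' z * G z = E z * G' z"
proof -
  have holomorphic: "E holomorphic_on UNIV" "G holomorphic_on UNIV"
    using dE dG by (auto simp: holomorphic_on_def field_differentiable_def)
  have "E' = deriv E" "G' = deriv G"
    using DERIV_imp_deriv[OF dE] DERIV_imp_deriv[OF dG] by auto
  then have "E' holomorphic_on UNIV" "G' holomorphic_on UNIV"
    using holomorphic by (auto intro: holomorphic_deriv)
  then have "(\<lambda>z. E' z * G z - E z * G' z) holomorphic_on UNIV"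
    by (intro holomorphic_intros holomorphic)
  then have "E' z * G z - E z * G' z = 0"
    by (rule entire_eq_0_of_real_eq_0) (simp add: assms(3))
  then show ?thesis by simp
qed

lemma entire_proportional_of_wronskian_eq_0:
  fixes E G E' G' :: "complex \<Rightarrow> complex"
  assumes dE: "\<And>z. (E has_field_derivative E' z) (at z)"
    and dG: "\<And>z. (G has_field_derivative G' z) (at z)"
    and wronskian: "\<And>z. E' z * G z = E z * G' z"
    and nonzero: "E z0 \<noteq> 0"
  shows "\<exists>c. \<forall>z. G z = c * E z"
proof -
  have "G' z * E z - G z * E' z = 0" for z
    using wronskian[of z] by (simp add: mult.commute)
  then have quotient_deriv: "((\<lambda>z. G z / E z) has_field_derivative 0) (at z)" if "E z \<noteq> 0" for z
    using DERIV_divide[OF dG dE that] by simp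
  obtain r where "r > 0" and r: "\<And>z. z \<in> ball z0 r \<Longrightarrow> E z \<noteq> 0"
    using continuous_at_avoid[OF DERIV_isCont[OF dE] nonzero] by (auto simp: dist_commute)
  have "((\<lambda>z. G z / E z) has_field_derivative 0) (at z within ball z0 r)" if "z \<in> ball z0 r" for z
    using quotient_deriv[OF r[OF that]] by (rule has_field_derivative_at_within)
  then have "\<exists>c. \<forall>z\<in>ball z0 r. G z / E z = c"
    by (intro has_field_derivative_zero_constant convex_ball)
  then obtain c where c: "\<And>z. z \<in> ball z0 r \<Longrightarrow> G z / E z = c"
    by blast
  have "G z - c * E z = 0" for z
  proof (rule analytic_continuation[of "\<lambda>z. G z - c * E z" UNIV "ball z0 r" z0])
    have "E holomorphic_on UNIV" "G holomorphic_on UNIV"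
      using dE dG by (auto simp: holomorphic_on_def field_differentiable_def)
    then show "(\<lambda>z. G z - c * E z) holomorphic_on UNIV"
      by (intro holomorphic_intros)
    show "z0 islimpt ball z0 r"
      using \<open>r > 0\<close> by (simp add: islimpt_ball)
    show "G w - c * E w = 0" if "w \<in> ball z0 r" for w
      using c[OF that] r[OF that] by (simp add: field_simps)
  qed (use \<open>r > 0\<close> in auto)
  then show ?thesis by auto
qed

lemma entire_phase_retrieval:
  fixes E G E' G' :: "complex \<Rightarrow> complex"
  assumes dE: "\<And>z. (E has_field_derivative E' z) (at z)"
    and dG: "\<And>z. (G has_field_derivative G' z) (at z)"
    and norm_eq: "\<And>t::real. norm (E t) = norm (G t)"
    and "\<And>t::real. norm (E' t) = norm (G' t)"
    and "\<And>t::real. norm (E t - \<i> * E' t) = norm (G t - \<i> * G' t)"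
  shows "\<exists>c. norm c = 1 \<and> (\<forall>t::real. G t = c * E t)"
proof (cases "\<forall>t::real. E t = 0")
  case True
  moreover have "G t = 0" for t :: real
    using True norm_eq[of t] by (metis norm_eq_zero)
  ultimately show ?thesis
    by (intro exI[of _ 1]) simp
next
  case False
  then obtain t0 :: real where "E t0 \<noteq> 0" by auto
  moreover have "E' z * G z = E z * G' z" for z
    using dE dG wronskian_eq_0_on_real[OF assms] by (rule entire_wronskian_eq_0)
  ultimately obtain c where c: "\<And>z. G z = c * E z"
    using entire_proportional_of_wronskian_eq_0[OF dE dG] by blast
  have "norm c = 1"
    using norm_eq[of t0] \<open>E t0 \<noteq> 0\<close> by (simp add: c norm_mult)
  with c show ?thesis by blast
qed

section \<open>Phase retrieval with Gaussian windows\<close>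

lemma phase_retrieval_exp_moments:
  fixes f g :: "real \<Rightarrow> complex"
  assumes f: "has_exp_moments f" and g: "has_exp_moments g"
    and "\<And>\<xi>::real. norm (fourier_laplace f \<xi>) = norm (fourier_laplace g \<xi>)"
    and "\<And>\<xi>::real. norm (fourier_laplace (\<lambda>x. of_real (2 * pi * x) * f x) \<xi>)
                  = norm (fourier_laplace (\<lambda>x. of_real (2 * pi * x) * g x) \<xi>)"
    and "\<And>\<xi>::real. norm (fourier_laplace (\<lambda>x. f x - of_real (2 * pi * x) * f x) \<xi>)
                  = norm (fourier_laplace (\<lambda>x. g x - of_real (2 * pi * x) * g x) \<xi>)"
  shows "\<exists>c. norm c = 1 \<and> (AE x in lborel. g x = c * f x)"
proof -
  \<comment> \<open>multiplication by \<open>2 * pi * x\<close> corresponds to \<open>\<i>\<close> times differentiation of the transform\<close>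
  have deriv: "(fourier_laplace u has_field_derivative
      - \<i> * fourier_laplace (\<lambda>x. of_real (2 * pi * x) * u x) z) (at z)"
    if "has_exp_moments u" for u z
  proof -
    have "(\<lambda>x. - (2 * pi * \<i>) * of_real x * u x) = (\<lambda>x. - \<i> * (of_real (2 * pi * x) * u x))"
      by (simp add: fun_eq_iff mult_ac)
    then show ?thesis
      using has_field_derivative_fourier_laplace[OF that, of z] by (simp only: fourier_laplace_cmult)
  qed
  have moments: "has_exp_moments (\<lambda>x. of_real (2 * pi * x) * u x)" if "has_exp_moments u" for u
    using has_exp_moments_mult_x[OF that, of "of_real (2 * pi)"] by (simp add: mult_ac)
  have "\<exists>c. norm c = 1 \<and> (\<forall>t::real. fourier_laplace g t = c * fourier_laplace f t)"
  proof (rule entire_phase_retrieval[OF deriv[OF f] deriv[OF g]])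
    show "norm (fourier_laplace f t) = norm (fourier_laplace g t)"
      "norm (- \<i> * fourier_laplace (\<lambda>x. of_real (2 * pi * x) * f x) t)
        = norm (- \<i> * fourier_laplace (\<lambda>x. of_real (2 * pi * x) * g x) t)"
      "norm (fourier_laplace f t - \<i> * (- \<i> * fourier_laplace (\<lambda>x. of_real (2 * pi * x) * f x) t))
        = norm (fourier_laplace g t - \<i> * (- \<i> * fourier_laplace (\<lambda>x. of_real (2 * pi * x) * g x) t))"
      for t :: real
      using assms(3-5)[of t] f g moments[OF f] moments[OF g]
      by (simp_all add: norm_mult fourier_laplace_diff)
  qed
  then obtain c where "norm c = 1" and c: "\<And>t::real. fourier_laplace g t = c * fourier_laplace f t"
    by blast
  have "AE x in lborel. g x = c * f x"
  proof (rule fourier_laplace_unique)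
    show "g \<in> borel_measurable lborel" "(\<lambda>x. c * f x) \<in> borel_measurable lborel"
      using has_exp_moments_measurable[OF f] has_exp_moments_measurable[OF g] by auto
    show "integrable lborel g" "integrable lborel (\<lambda>x. c * f x)"
      using has_exp_moments_integrable_kernel[OF g, of 0] has_exp_moments_integrable_kernel[OF f, of 0]
      by simp_all
    show "fourier_laplace g \<xi> = fourier_laplace (\<lambda>x. c * f x) \<xi>" for \<xi> :: real
      by (simp only: c fourier_laplace_cmult)
  qed
  with \<open>norm c = 1\<close> show ?thesis by blast
qed

lemma gaussian_phase_retrieval_borel:
  fixes \<phi> \<psi> :: "real \<Rightarrow> complex"
  assumes meas: "\<phi> \<in> borel_measurable lborel" "\<psi> \<in> borel_measurable lborel"
    and square: "integrable lborel (\<lambda>x. (norm (\<phi> x))\<^sup>2)" "integrable lborel (\<lambda>x. (norm (\<psi> x))\<^sup>2)"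
    and "\<And>\<xi>::real. norm (fourier_laplace (\<lambda>t. of_real (gamma1 t) * \<phi> t) \<xi>)
                  = norm (fourier_laplace (\<lambda>t. of_real (gamma1 t) * \<psi> t) \<xi>)"
    and "\<And>\<xi>::real. norm (fourier_laplace (\<lambda>t. of_real (gamma2 t) * \<phi> t) \<xi>)
                  = norm (fourier_laplace (\<lambda>t. of_real (gamma2 t) * \<psi> t) \<xi>)"
    and "\<And>\<xi>::real. norm (fourier_laplace (\<lambda>t. of_real (gamma3 t) * \<phi> t) \<xi>)
                  = norm (fourier_laplace (\<lambda>t. of_real (gamma3 t) * \<psi> t) \<xi>)"
  shows "\<exists>c. norm c = 1 \<and> (AE x in lborel. \<psi> x = c * \<phi> x)"
proof -
  have gamma2: "(\<lambda>t. of_real (gamma2 t) * u t) = (\<lambda>t. of_real (2 * pi * t) * (of_real (gamma1 t) * u t))"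
    and gamma3: "(\<lambda>t. of_real (gamma3 t) * u t)
      = (\<lambda>t. of_real (gamma1 t) * u t - of_real (2 * pi * t) * (of_real (gamma1 t) * u t))"
    for u :: "real \<Rightarrow> complex"
    by (simp_all add: fun_eq_iff gamma1_def gamma2_def gamma3_def algebra_simps)
  obtain c where "norm c = 1"
    and c: "AE x in lborel. of_real (gamma1 x) * \<psi> x = c * (of_real (gamma1 x) * \<phi> x)"
    using phase_retrieval_exp_moments[OF has_exp_moments_gamma1_mult[OF meas(1) square(1)]
        has_exp_moments_gamma1_mult[OF meas(2) square(2)]] assms(5-7)
    unfolding gamma2 gamma3 by blast
  from c have "AE x in lborel. \<psi> x = c * \<phi> x"
    by eventually_elim (simp add: gamma1_def)
  with \<open>norm c = 1\<close> show ?thesis by blast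
qed

lemma borel_measurable_representative:
  fixes \<phi> :: "real \<Rightarrow> complex"
  assumes "\<phi> \<in> borel_measurable lebesgue"
  obtains \<phi>' where "\<phi>' \<in> borel_measurable lborel" "AE x in lborel. \<phi> x = \<phi>' x"
proof -
  have "(\<lambda>x. Re (\<phi> x)) \<in> borel_measurable lebesgue" "(\<lambda>x. Im (\<phi> x)) \<in> borel_measurable lebesgue"
    using assms by (simp_all add: borel_measurable_complex_iff)
  from completion_ex_borel_measurable_real[OF this(1)] completion_ex_borel_measurable_real[OF this(2)]
  obtain r i where r: "r \<in> borel_measurable lborel" "AE x in lborel. Re (\<phi> x) = r x"
    and i: "i \<in> borel_measurable lborel" "AE x in lborel. Im (\<phi> x) = i x"
    by blast
  show ?thesis
  proof
    show "(\<lambda>x. Complex (r x) (i x)) \<in> borel_measurable lborel"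
      using r(1) i(1) by (simp add: borel_measurable_complex_iff)
    from r(2) i(2) show "AE x in lborel. \<phi> x = Complex (r x) (i x)"
      by eventually_elim (simp add: complex_eq_iff)
  qed
qed

lemma square_integrable_borel_representative:
  assumes "square_integrable \<phi>"
  obtains \<phi>' where "\<phi>' \<in> borel_measurable lborel" "integrable lborel (\<lambda>x. (norm (\<phi>' x))\<^sup>2)"
    "AE x in lebesgue. \<phi> x = \<phi>' x"
proof -
  have meas: "\<phi> \<in> borel_measurable lebesgue" and square: "integrable lebesgue (\<lambda>x. (norm (\<phi> x))\<^sup>2)"
    using assms unfolding square_integrable_def by auto
  obtain \<phi>' where meas': "\<phi>' \<in> borel_measurable lborel" and ae: "AE x in lborel. \<phi> x = \<phi>' x"
    using borel_measurable_representative[OF meas] .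
  have ae': "AE x in lebesgue. \<phi> x = \<phi>' x"
    using ae by (rule AE_completion)
  have "integrable lebesgue (\<lambda>x. (norm (\<phi>' x))\<^sup>2)"
  proof (rule integrable_cong_AE[THEN iffD1, OF _ _ _ square])
    show "(\<lambda>x. (norm (\<phi> x))\<^sup>2) \<in> borel_measurable lebesgue"
      using meas by measurable
    have "(\<lambda>x. (norm (\<phi>' x))\<^sup>2) \<in> borel_measurable lborel"
      using meas' by measurable
    then show "(\<lambda>x. (norm (\<phi>' x))\<^sup>2) \<in> borel_measurable lebesgue"
      by (rule measurable_completion)
    show "AE x in lebesgue. (norm (\<phi> x))\<^sup>2 = (norm (\<phi>' x))\<^sup>2"
      using ae' by eventually_elim simp
  qed
  then have "integrable lborel (\<lambda>x. (norm (\<phi>' x))\<^sup>2)"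
    using meas' by (subst integrable_completion[symmetric]) auto
  then show ?thesis
    by (rule that[OF meas' _ ae'])
qed

lemma fourier_weighted_eq_fourier_laplace:
  fixes \<phi> \<phi>' :: "real \<Rightarrow> complex" and w :: "real \<Rightarrow> real"
  assumes "\<phi> \<in> borel_measurable lebesgue" "\<phi>' \<in> borel_measurable lborel"
    and "AE x in lebesgue. \<phi> x = \<phi>' x" and "w \<in> borel_measurable borel"
  shows "fourier (\<lambda>t. of_real (w t) * \<phi> t) \<xi> = fourier_laplace (\<lambda>t. of_real (w t) * \<phi>' t) \<xi>"
proof -
  have [measurable]: "cis \<in> borel_measurable borel"
    by (intro borel_measurable_continuous_onI continuous_intros)
  have w: "(\<lambda>x. complex_of_real (w x)) \<in> borel_measurable lborel"
    using assms(4) by measurable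
  have kernel: "(\<lambda>x. cis (- 2 * pi * x * \<xi>)) \<in> borel_measurable lborel"
    by measurable
  have integrand: "(\<lambda>x. of_real (w x) * \<phi>' x * cis (- 2 * pi * x * \<xi>)) \<in> borel_measurable lborel"
    by (rule borel_measurable_times[OF borel_measurable_times[OF w assms(2)] kernel])
  have "fourier (\<lambda>t. of_real (w t) * \<phi> t) \<xi> = (\<integral>x. of_real (w x) * \<phi>' x * cis (- 2 * pi * x * \<xi>) \<partial>lebesgue)"
    unfolding fourier_def
  proof (rule integral_cong_AE)
    show "(\<lambda>x. of_real (w x) * \<phi> x * cis (- 2 * pi * x * \<xi>)) \<in> borel_measurable lebesgue"
      using borel_measurable_times[OF borel_measurable_times[OF measurable_completion[OF w] assms(1)]
          measurable_completion[OF kernel]] .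
    show "(\<lambda>x. of_real (w x) * \<phi>' x * cis (- 2 * pi * x * \<xi>)) \<in> borel_measurable lebesgue"
      using integrand by (rule measurable_completion)
    show "AE x in lebesgue. of_real (w x) * \<phi> x * cis (- 2 * pi * x * \<xi>)
        = of_real (w x) * \<phi>' x * cis (- 2 * pi * x * \<xi>)"
      using assms(3) by eventually_elim simp
  qed
  also have "\<dots> = (\<integral>x. of_real (w x) * \<phi>' x * cis (- 2 * pi * x * \<xi>) \<partial>lborel)"
    using integrand by (rule integral_completion)
  also have "\<dots> = fourier_laplace (\<lambda>t. of_real (w t) * \<phi>' t) \<xi>"
    unfolding fourier_laplace_def
    by (intro Bochner_Integration.integral_cong refl) (simp add: cis_conv_exp mult_ac)
  finally show ?thesis .
qed

lemma gamma_measurable: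
  "gamma1 \<in> borel_measurable borel" "gamma2 \<in> borel_measurable borel" "gamma3 \<in> borel_measurable borel"
  unfolding gamma1_def[abs_def] gamma2_def[abs_def] gamma3_def[abs_def]
  by (intro borel_measurable_continuous_onI continuous_intros)+

theorem mainTheorem2:
  fixes \<phi> \<psi> :: "real \<Rightarrow> complex"
  assumes "square_integrable \<phi>" and "square_integrable \<psi>"
    and "\<forall>\<xi>. norm (fourier (\<lambda>t. complex_of_real (gamma1 t) * \<phi> t) \<xi>)
              = norm (fourier (\<lambda>t. complex_of_real (gamma1 t) * \<psi> t) \<xi>)"
    and "\<forall>\<xi>. norm (fourier (\<lambda>t. complex_of_real (gamma2 t) * \<phi> t) \<xi>)
              = norm (fourier (\<lambda>t. complex_of_real (gamma2 t) * \<psi> t) \<xi>)"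
    and "\<forall>\<xi>. norm (fourier (\<lambda>t. complex_of_real (gamma3 t) * \<phi> t) \<xi>)
              = norm (fourier (\<lambda>t. complex_of_real (gamma3 t) * \<psi> t) \<xi>)"
  shows "\<exists>c::complex. norm c = 1 \<and> (AE x in lebesgue. \<psi> x = c * \<phi> x)"
proof -
  obtain \<phi>' where \<phi>': "\<phi>' \<in> borel_measurable lborel" "integrable lborel (\<lambda>x. (norm (\<phi>' x))\<^sup>2)"
      "AE x in lebesgue. \<phi> x = \<phi>' x"
    using assms(1) by (rule square_integrable_borel_representative)
  obtain \<psi>' where \<psi>': "\<psi>' \<in> borel_measurable lborel" "integrable lborel (\<lambda>x. (norm (\<psi>' x))\<^sup>2)"
      "AE x in lebesgue. \<psi> x = \<psi>' x"
    using assms(2) by (rule square_integrable_borel_representative)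
  have "\<phi> \<in> borel_measurable lebesgue" "\<psi> \<in> borel_measurable lebesgue"
    using assms(1,2) by (simp_all add: square_integrable_def)
  note fourier_eq = fourier_weighted_eq_fourier_laplace[OF this(1) \<phi>'(1) \<phi>'(3)]
    fourier_weighted_eq_fourier_laplace[OF this(2) \<psi>'(1) \<psi>'(3)]
  obtain c where "norm c = 1" and c: "AE x in lborel. \<psi>' x = c * \<phi>' x"
    using gaussian_phase_retrieval_borel[OF \<phi>'(1) \<psi>'(1) \<phi>'(2) \<psi>'(2)] assms(3-5)
    by (auto simp: fourier_eq gamma_measurable)
  have "AE x in lebesgue. \<psi> x = c * \<phi> x"
    using AE_completion[OF c] \<phi>'(3) \<psi>'(3) by eventually_elim simp
  with \<open>norm c = 1\<close> show ?thesis by blast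
qed

end
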